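(* Let $d=3$, $\omega=e^{2\pi i/3}$. Consider phases $\phi_{j,y}\in\mathbb{R}$ ($j,y\in\{0,1,2\}$), considered modulo $2\pi$, with $\phi_{0,y}+\phi_{1,y}+\phi_{2,y}\equiv0 \pmod{2\pi}$ for each $y$, and regard two such families as equivalent if they differ by adding a common multiple of $2\pi/3$ to all of $\phi_{0,1},\phi_{1,1},\phi_{2,1}$ and/or a common multiple of $2\pi/3$ to all of $\phi_{0,2},\phi_{1,2},\phi_{2,2}$ (equivalently, replacing $\overline{B}_1$ by $\omega^a\overline{B}_1$ and $\overline{B}_2$ by $\omega^b\overline{B}_2$). Then the system $\sum_{l=0}^{2}\exp\!\big(i\sum_{m=1}^{n}(\phi_{l\oplus m,y'}-\phi_{l\oplus m,y})\big)=3\delta_{yy'}$ for all $y,y'\in\{0,1,2\}$ and $n\in\{1,2\}$ holds if and only if, up to this equivalence and with $\phi_{0,0},\phi_{1,0}$ arbitrary and $\phi_{2,y}\equiv-\phi_{0,y}-\phi_{1,y}$, one of the following holds: (a) $\phi_{0,1}=\phi_{0,0}-2\pi/3$, $\phi_{1,1}=\phi_{1,0}$, $\phi_{0,2}=\phi_{0,0}-2\pi/3$, $\phi_{1,2}=\phi_{1,0}+2\pi/3$; (b) $\phi_{0,1}=\phi_{0,0}-2\pi/3$, $\phi_{1,1}=\phi_{1,0}+2\pi/3$, $\phi_{0,2}=\phi_{0,0}-2\pi/3$, $\phi_{1,2}=\phi_{1,0}$. In case (a) the corresponding observables are $\overline{B}_0=e^{i\phi_{0,0}}|0\rangle\langle2|+e^{i\phi_{1,0}}|1\rangle\langle0|+e^{-i(\phi_{0,0}+\phi_{1,0})}|2\rangle\langle1|$,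 $\overline{B}_1=\omega^2e^{i\phi_{0,0}}|0\rangle\langle2|+e^{i\phi_{1,0}}|1\rangle\langle0|+\omega e^{-i(\phi_{0,0}+\phi_{1,0})}|2\rangle\langle1|$, $\overline{B}_2=\omega^2e^{i\phi_{0,0}}|0\rangle\langle2|+\omega e^{i\phi_{1,0}}|1\rangle\langle0|+e^{-i(\phi_{0,0}+\phi_{1,0})}|2\rangle\langle1|$.
   Context: $\oplus$ denotes addition modulo 3. For $d=3$ the reference observables are $\overline{B}_y=\sum_{l=0}^{2}e^{i\phi_{l\oplus1,y}}|l+1\rangle\langle l|$ on $\mathbb{C}^3$ (labels mod 3). The displayed system is the orthogonality condition $\sum_{k}(\gamma^{(n)}_{y'k})^*\gamma^{(n)}_{yk}=\delta_{yy'}$ written in terms of the phases. *)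

theory Defs
  imports Complex_Main
begin

definition cong2pi :: "real \<Rightarrow> real \<Rightarrow> bool" where
  "cong2pi x y \<longleftrightarrow> (\<exists>k::int. x - y = 2 * pi * of_int k)"

definition orth_system :: "(nat \<Rightarrow> nat \<Rightarrow> real) \<Rightarrow> bool" where
  "orth_system phi \<longleftrightarrow>
     (\<forall>y<3. \<forall>y'<3. \<forall>n\<in>{1,2::nat}.
        (\<Sum>l<3. exp (\<i> * complex_of_real
           (\<Sum>m=1..n. phi ((l + m) mod 3) y' - phi ((l + m) mod 3) y)))
        = (if y = y' then 3 else 0))"

definition shift_phases :: "int \<Rightarrow> int \<Rightarrow> (nat \<Rightarrow> nat \<Rightarrow> real) \<Rightarrow> (nat \<Rightarrow> nat \<Rightarrow> real)" where
  "shift_phases a b phi = (\<lambda>j y. phi j y + 2 * pi / 3 *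
      (if y = 1 then of_int a else if y = 2 then of_int b else 0))"

definition case_a :: "(nat \<Rightarrow> nat \<Rightarrow> real) \<Rightarrow> bool" where
  "case_a psi \<longleftrightarrow>
     cong2pi (psi 0 1) (psi 0 0 - 2 * pi / 3) \<and> cong2pi (psi 1 1) (psi 1 0) \<and>
     cong2pi (psi 0 2) (psi 0 0 - 2 * pi / 3) \<and> cong2pi (psi 1 2) (psi 1 0 + 2 * pi / 3)"

definition case_b :: "(nat \<Rightarrow> nat \<Rightarrow> real) \<Rightarrow> bool" where
  "case_b psi \<longleftrightarrow>
     cong2pi (psi 0 1) (psi 0 0 - 2 * pi / 3) \<and> cong2pi (psi 1 1) (psi 1 0 + 2 * pi / 3) \<and>
     cong2pi (psi 0 2) (psi 0 0 - 2 * pi / 3) \<and> cong2pi (psi 1 2) (psi 1 0)"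

end

theory Submission
  imports Defs "HOL-Analysis.Complex_Transcendental"
begin

(* Put u_j = exp (i (phi_{j,y'} - phi_{j,y})). The equations for n = 1 and n = 2 say that the
   first two elementary symmetric functions of (u_0, u_1, u_2) vanish, and the constraint on the
   phases makes their product 1, so u_0, u_1, u_2 are the roots of z^3 - 1: either
   u = u_0 (1, omega, omega^2) or u = u_0 (1, omega^2, omega). The ratios for the pair of
   observables (1, 2) are the quotients of those for (0, 2) and (0, 1), which forces these two
   pairs to have opposite orientations; the two choices are the cases (a) and (b), and the
   shifts by multiples of 2 pi / 3 absorb the cube roots of unity u_0. *)

definition balanced :: "(nat \<Rightarrow> 'a::comm_ring) \<Rightarrow> bool" where
  "balanced u \<longleftrightarrow> u 0 + u 1 + u 2 = 0 \<and> u 0 * u 1 + u 1 * u 2 + u 2 * u 0 = 0"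

lemma primitive_cube_root_facts:
  fixes w :: "'a::field"
  assumes "w\<^sup>2 + w + 1 = 0" and "w \<noteq> 1"
  shows "w ^ 3 = 1" "w \<noteq> 0" "w\<^sup>2 \<noteq> 1" "w\<^sup>2 \<noteq> w"
proof -
  show cube: "w ^ 3 = 1"
    using assms(1) by algebra
  show "w \<noteq> 0"
    using assms(1) by auto
  show "w\<^sup>2 \<noteq> 1"
  proof
    assume "w\<^sup>2 = 1"
    then have "w ^ 3 = w" by (simp add: power3_eq_cube power2_eq_square)
    with cube assms(2) show False by simp
  qed
  show "w\<^sup>2 \<noteq> w"
  proof
    assume "w\<^sup>2 = w"
    then have "w * (w - 1) = 0"
      by (simp add: algebra_simps power2_eq_square)
    with \<open>w \<noteq> 0\<close> assms(2) show False by simp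
  qed
qed

lemma balanced_iff_cube_root:
  fixes u :: "nat \<Rightarrow> 'a::field"
  assumes w: "w\<^sup>2 + w + 1 = 0" and prod: "u 0 * u 1 * u 2 = 1"
  shows "balanced u \<longleftrightarrow> u 0 ^ 3 = 1 \<and> (u 1 = w * u 0 \<or> u 1 = w\<^sup>2 * u 0)"
proof
  assume "balanced u"
  then have u2: "u 2 = - u 0 - u 1" and e2: "u 0 * u 1 + u 1 * u 2 + u 2 * u 0 = 0"
    unfolding balanced_def by (simp_all add: eq_neg_iff_add_eq_0 algebra_simps)
  have "(u 1 - w * u 0) * (u 1 - w\<^sup>2 * u 0) = 0"
    using e2 w unfolding u2 by algebra
  then have rot: "u 1 = w * u 0 \<or> u 1 = w\<^sup>2 * u 0"
    by simp
  moreover have "u 0 ^ 3 = 1"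
    using rot prod w unfolding u2 by algebra
  ultimately show "u 0 ^ 3 = 1 \<and> (u 1 = w * u 0 \<or> u 1 = w\<^sup>2 * u 0)"
    by blast
next
  assume "u 0 ^ 3 = 1 \<and> (u 1 = w * u 0 \<or> u 1 = w\<^sup>2 * u 0)"
  then have cube: "u 0 ^ 3 = 1" and rot: "u 1 = w * u 0 \<or> u 1 = w\<^sup>2 * u 0"
    by blast+
  have "u 0 * u 1 \<noteq> 0"
    using prod by auto
  moreover have "u 0 * u 1 * (u 2 - (- u 0 - u 1)) = 0"
    using rot prod cube w by algebra
  ultimately have "u 2 = - u 0 - u 1"
    by simp
  then show "balanced u"
    unfolding balanced_def using rot w by algebra
qed

lemma balanced_quotient_iff:
  fixes x y z :: "nat \<Rightarrow> 'a::field"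
  assumes w: "w\<^sup>2 + w + 1 = 0" "w \<noteq> 1"
    and prod: "x 0 * x 1 * x 2 = 1" "y 0 * y 1 * y 2 = 1"
    and quot: "\<And>j. j < 3 \<Longrightarrow> z j * x j = y j"
  shows "balanced x \<and> balanced y \<and> balanced z \<longleftrightarrow>
    x 0 ^ 3 = 1 \<and> y 0 ^ 3 = 1 \<and>
    (x 1 = w * x 0 \<and> y 1 = w\<^sup>2 * y 0 \<or> x 1 = w\<^sup>2 * x 0 \<and> y 1 = w * y 0)"
proof -
  note w_facts = primitive_cube_root_facts [OF w]
  have nz: "x 0 \<noteq> 0" "x 1 \<noteq> 0" "y 0 \<noteq> 0"
    using prod by auto
  have z0: "z 0 = y 0 / x 0" and z1: "z 1 = y 1 / x 1"
    using quot [of 0] quot [of 1] nz by (simp_all add: field_simps)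
  have "(z 0 * z 1 * z 2) * (x 0 * x 1 * x 2) = y 0 * y 1 * y 2"
    using quot [of 0] quot [of 1] quot [of 2] by (simp add: ac_simps)
  then have prod_z: "z 0 * z 1 * z 2 = 1"
    using prod by simp
  have z_rot: "z 0 ^ 3 = 1 \<and> (z 1 = w * z 0 \<or> z 1 = w\<^sup>2 * z 0) \<longleftrightarrow> r \<noteq> t"
    if "x 0 ^ 3 = 1" "y 0 ^ 3 = 1" "x 1 = r * x 0" "y 1 = t * y 0"
      "r = w \<or> r = w\<^sup>2" "t = w \<or> t = w\<^sup>2" for r t
  proof -
    have "r \<noteq> 0"
      using that(5) w_facts by auto
    have "z 0 \<noteq> 0"
      using nz by (simp add: z0)
    have "z 1 = t / r * z 0"
      unfolding z0 z1 that(3,4) using nz by (simp add: field_simps)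
    then have s_iff: "z 1 = s * z 0 \<longleftrightarrow> t = s * r" for s
      using \<open>r \<noteq> 0\<close> \<open>z 0 \<noteq> 0\<close> by (auto simp: field_simps)
    have "z 0 ^ 3 = 1"
      using that(1,2) by (simp add: z0 power_divide)
    then show ?thesis
      unfolding s_iff using that(5,6) w_facts by (auto simp: power2_eq_square power3_eq_cube mult.assoc)
  qed
  show ?thesis
    unfolding balanced_iff_cube_root [OF w(1) prod(1)] balanced_iff_cube_root [OF w(1) prod(2)]
      balanced_iff_cube_root [OF w(1) prod_z]
    using z_rot [of w w] z_rot [of w "w\<^sup>2"] z_rot [of "w\<^sup>2" w] z_rot [of "w\<^sup>2" "w\<^sup>2"] w_facts(4)
    by auto
qed

lemma cong2pi_iff_cis: "cong2pi x y \<longleftrightarrow> cis (x - y) = 1"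
proof -
  have "cis (x - y) = 1 \<longleftrightarrow> (\<exists>n::int. x - y = of_int (2 * n) * pi)"
    by (simp add: cis_conv_exp exp_eq_1)
  then show ?thesis
    unfolding cong2pi_def by (simp add: mult.commute mult.left_commute)
qed

definition \<omega> :: complex where "\<omega> = cis (2 * pi / 3)"

lemma omega_nonzero [simp]: "\<omega> \<noteq> 0"
  by (simp add: \<omega>_def)

lemma omega_powi: "\<omega> powi k = cis (2 * pi / 3 * of_int k)"
  by (simp add: \<omega>_def cis_power_int mult.commute)

lemma omega_powi_cube: "(\<omega> powi k) ^ 3 = 1"
proof -
  have "cis (2 * (pi * of_int k)) = 1"
    using cis_multiple_2pi [of "of_int k"] by (simp add: mult.assoc)
  then show ?thesis
    by (simp add: omega_powi Complex.DeMoivre)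
qed

lemma omega_cube: "\<omega> ^ 3 = 1"
  using omega_powi_cube [of 1] by simp

lemma omega_neq_1: "\<omega> \<noteq> 1"
proof
  assume "\<omega> = 1"
  then have "cong2pi (2 * pi / 3) 0"
    by (simp add: cong2pi_iff_cis \<omega>_def)
  then obtain k :: int where "2 * pi / 3 = 2 * pi * of_int k"
    unfolding cong2pi_def by auto
  then have "1 = 3 * k"
    by (simp add: field_simps)
  then show False by presburger
qed

lemma omega_square_add: "\<omega>\<^sup>2 + \<omega> + 1 = 0"
proof -
  have "(\<omega> - 1) * (\<omega>\<^sup>2 + \<omega> + 1) = \<omega> ^ 3 - 1"
    by (simp add: algebra_simps power2_eq_square power3_eq_cube)
  then show ?thesis using omega_cube omega_neq_1 by simp
qed

lemma cube_root_unity_iff: "z ^ 3 = 1 \<longleftrightarrow> (\<exists>k::int. z = \<omega> powi k)"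
proof
  assume "z ^ 3 = 1"
  moreover have "(z - 1) * (z - \<omega>) * (z - \<omega>\<^sup>2) = z ^ 3 - 1"
    using omega_square_add omega_cube by algebra
  ultimately have "z = \<omega> powi 0 \<or> z = \<omega> powi 1 \<or> z = \<omega> powi 2"
    by simp
  then show "\<exists>k::int. z = \<omega> powi k" by blast
qed (auto simp: omega_powi_cube)

lemma omega_powi_add: "\<omega> powi m * \<omega> powi n = \<omega> powi (m + n)"
  by (simp add: power_int_add)

lemma mult_omega_powi_eq_1_iff: "z * \<omega> powi n = 1 \<longleftrightarrow> z = \<omega> powi (- n)"
proof -
  have "\<omega> powi n * \<omega> powi (- n) = 1"
    by (simp add: omega_powi_add)
  then show ?thesis
    by (metis mult.assoc mult.commute mult_1)
qed

lemma common_cube_root_shift_iff: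
  "(\<exists>k::int. u * \<omega> powi (k - i) = 1 \<and> v * \<omega> powi (k - j) = 1) \<longleftrightarrow> u ^ 3 = 1 \<and> v = \<omega> powi (j - i) * u"
proof
  assume "\<exists>k. u * \<omega> powi (k - i) = 1 \<and> v * \<omega> powi (k - j) = 1"
  then obtain k where u: "u = \<omega> powi (i - k)" and v: "v = \<omega> powi (j - k)"
    unfolding mult_omega_powi_eq_1_iff by auto
  show "u ^ 3 = 1 \<and> v = \<omega> powi (j - i) * u"
    unfolding u v by (simp add: omega_powi_cube omega_powi_add)
next
  assume "u ^ 3 = 1 \<and> v = \<omega> powi (j - i) * u"
  then obtain m where u: "u = \<omega> powi m" and v: "v = \<omega> powi (j - i) * u"
    using cube_root_unity_iff by blast
  then have "u = \<omega> powi (- ((i - m) - i)) \<and> v = \<omega> powi (- ((i - m) - j))"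
    by (simp add: omega_powi_add algebra_simps)
  then show "\<exists>k. u * \<omega> powi (k - i) = 1 \<and> v * \<omega> powi (k - j) = 1"
    unfolding mult_omega_powi_eq_1_iff by blast
qed

lemma cong2pi_shift_iff:
  "cong2pi (x + 2 * pi / 3 * of_int k) (y + 2 * pi / 3 * of_int l) \<longleftrightarrow> cis (x - y) * \<omega> powi (k - l) = 1"
proof -
  have arg: "x + 2 * pi / 3 * of_int k - (y + 2 * pi / 3 * of_int l) = (x - y) + 2 * pi / 3 * of_int (k - l)"
    by (simp add: field_simps)
  show ?thesis
    unfolding cong2pi_iff_cis arg omega_powi cis_mult ..
qed

definition phase_ratio :: "(nat \<Rightarrow> nat \<Rightarrow> real) \<Rightarrow> nat \<Rightarrow> nat \<Rightarrow> nat \<Rightarrow> complex" where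
  "phase_ratio phi y y' j = cis (phi j y' - phi j y)"

lemma phase_ratio_trans: "phase_ratio phi y' y'' j * phase_ratio phi y y' j = phase_ratio phi y y'' j"
  by (simp add: phase_ratio_def cis_mult)

lemma phase_ratio_swap: "phase_ratio phi y' y j = cnj (phase_ratio phi y y' j)"
  by (simp add: phase_ratio_def cis_cnj)

lemma phase_ratio_prod:
  assumes "cong2pi (phi 0 y + phi 1 y + phi 2 y) 0" and "cong2pi (phi 0 y' + phi 1 y' + phi 2 y') 0"
  shows "phase_ratio phi y y' 0 * phase_ratio phi y y' 1 * phase_ratio phi y y' 2 = 1"
proof -
  have "phase_ratio phi y y' 0 * phase_ratio phi y y' 1 * phase_ratio phi y y' 2
      = cis (phi 0 y' + phi 1 y' + phi 2 y') / cis (phi 0 y + phi 1 y + phi 2 y)"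
    unfolding phase_ratio_def cis_mult cis_divide by (simp add: algebra_simps)
  then show ?thesis
    using assms by (simp add: cong2pi_iff_cis)
qed

lemma balanced_cnj: "balanced (\<lambda>j. cnj (u j)) \<longleftrightarrow> balanced u"
  unfolding balanced_def by (metis complex_cnj_add complex_cnj_mult complex_cnj_zero_iff)

lemma sum_lessThan_3: "(\<Sum>l<3::nat. f l) = f 0 + f 1 + f 2"
  by (simp add: numeral_3_eq_3 numeral_2_eq_2)

lemma orth_sum_1:
  "(\<Sum>l<3. exp (\<i> * complex_of_real (\<Sum>m=1..1. phi ((l + m) mod 3) y' - phi ((l + m) mod 3) y)))
   = phase_ratio phi y y' 0 + phase_ratio phi y y' 1 + phase_ratio phi y y' 2"
  unfolding cis_conv_exp [symmetric] by (simp add: sum_lessThan_3 phase_ratio_def numeral_2_eq_2)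

lemma orth_sum_2:
  "(\<Sum>l<3. exp (\<i> * complex_of_real (\<Sum>m=1..2. phi ((l + m) mod 3) y' - phi ((l + m) mod 3) y)))
   = phase_ratio phi y y' 0 * phase_ratio phi y y' 1 + phase_ratio phi y y' 1 * phase_ratio phi y y' 2
     + phase_ratio phi y y' 2 * phase_ratio phi y y' 0"
proof -
  have "{1..2::nat} = {1, 2}"
    by auto
  then have summand: "exp (\<i> * complex_of_real (\<Sum>m=1..2. phi ((l + m) mod 3) y' - phi ((l + m) mod 3) y))
      = phase_ratio phi y y' ((l + 1) mod 3) * phase_ratio phi y y' ((l + 2) mod 3)" for l
    unfolding cis_conv_exp [symmetric] by (simp add: phase_ratio_def cis_mult)
  show ?thesis
    unfolding sum_lessThan_3 summand by (simp add: ac_simps numeral_2_eq_2)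
qed

lemma orth_system_iff_balanced:
  "orth_system phi \<longleftrightarrow> (\<forall>y<3. \<forall>y'<3. y \<noteq> y' \<longrightarrow> balanced (phase_ratio phi y y'))"
proof -
  have pair: "(phase_ratio phi y y' 0 + phase_ratio phi y y' 1 + phase_ratio phi y y' 2
        = (if y = y' then 3 else 0) \<and>
      phase_ratio phi y y' 0 * phase_ratio phi y y' 1 + phase_ratio phi y y' 1 * phase_ratio phi y y' 2
        + phase_ratio phi y y' 2 * phase_ratio phi y y' 0 = (if y = y' then 3 else 0))
      \<longleftrightarrow> (y \<noteq> y' \<longrightarrow> balanced (phase_ratio phi y y'))" for y y'
    by (simp add: balanced_def phase_ratio_def)
  show ?thesis
    unfolding orth_system_def ball_simps orth_sum_1 orth_sum_2 using pair by simp
qed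

lemma orth_system_iff_pairs:
  "orth_system phi \<longleftrightarrow>
    balanced (phase_ratio phi 0 1) \<and> balanced (phase_ratio phi 0 2) \<and> balanced (phase_ratio phi 1 2)"
proof -
  have swap: "balanced (phase_ratio phi y' y) \<longleftrightarrow> balanced (phase_ratio phi y y')" for y y'
  proof -
    have "phase_ratio phi y' y = (\<lambda>j. cnj (phase_ratio phi y y' j))"
      by (rule ext) (rule phase_ratio_swap)
    then show ?thesis
      by (simp add: balanced_cnj)
  qed
  have three: "(\<forall>y<3. P y) \<longleftrightarrow> P 0 \<and> P 1 \<and> P 2" for P :: "nat \<Rightarrow> bool"
    by (auto simp: less_Suc_eq numeral_3_eq_3 numeral_2_eq_2)
  show ?thesis
    unfolding orth_system_iff_balanced three using swap [of 0 1] swap [of 0 2] swap [of 1 2] by auto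
qed

lemma ex_shift_case_a_iff:
  "(\<exists>a b. case_a (shift_phases a b phi)) \<longleftrightarrow>
    phase_ratio phi 0 1 0 ^ 3 = 1 \<and> phase_ratio phi 0 1 1 = \<omega> * phase_ratio phi 0 1 0 \<and>
    phase_ratio phi 0 2 0 ^ 3 = 1 \<and> phase_ratio phi 0 2 1 = \<omega>\<^sup>2 * phase_ratio phi 0 2 0"
proof -
  have "case_a (shift_phases a b phi) \<longleftrightarrow>
      (cong2pi (phi 0 1 + 2 * pi / 3 * of_int a) (phi 0 0 + 2 * pi / 3 * of_int (- 1)) \<and>
       cong2pi (phi 1 1 + 2 * pi / 3 * of_int a) (phi 1 0 + 2 * pi / 3 * of_int 0)) \<and>
      (cong2pi (phi 0 2 + 2 * pi / 3 * of_int b) (phi 0 0 + 2 * pi / 3 * of_int (- 1)) \<and>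
       cong2pi (phi 1 2 + 2 * pi / 3 * of_int b) (phi 1 0 + 2 * pi / 3 * of_int 1))" for a b
    by (simp add: case_a_def shift_phases_def)
  then have "(\<exists>a b. case_a (shift_phases a b phi)) \<longleftrightarrow>
      (\<exists>a. phase_ratio phi 0 1 0 * \<omega> powi (a - - 1) = 1 \<and> phase_ratio phi 0 1 1 * \<omega> powi (a - 0) = 1) \<and>
      (\<exists>b. phase_ratio phi 0 2 0 * \<omega> powi (b - - 1) = 1 \<and> phase_ratio phi 0 2 1 * \<omega> powi (b - 1) = 1)"
    unfolding cong2pi_shift_iff phase_ratio_def by blast
  then show ?thesis
    unfolding common_cube_root_shift_iff by simp
qed

lemma ex_shift_case_b_iff:
  "(\<exists>a b. case_b (shift_phases a b phi)) \<longleftrightarrow>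
    phase_ratio phi 0 1 0 ^ 3 = 1 \<and> phase_ratio phi 0 1 1 = \<omega>\<^sup>2 * phase_ratio phi 0 1 0 \<and>
    phase_ratio phi 0 2 0 ^ 3 = 1 \<and> phase_ratio phi 0 2 1 = \<omega> * phase_ratio phi 0 2 0"
proof -
  have "case_b (shift_phases a b phi) \<longleftrightarrow>
      (cong2pi (phi 0 1 + 2 * pi / 3 * of_int a) (phi 0 0 + 2 * pi / 3 * of_int (- 1)) \<and>
       cong2pi (phi 1 1 + 2 * pi / 3 * of_int a) (phi 1 0 + 2 * pi / 3 * of_int 1)) \<and>
      (cong2pi (phi 0 2 + 2 * pi / 3 * of_int b) (phi 0 0 + 2 * pi / 3 * of_int (- 1)) \<and>
       cong2pi (phi 1 2 + 2 * pi / 3 * of_int b) (phi 1 0 + 2 * pi / 3 * of_int 0))" for a b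
    by (simp add: case_b_def shift_phases_def)
  then have "(\<exists>a b. case_b (shift_phases a b phi)) \<longleftrightarrow>
      (\<exists>a. phase_ratio phi 0 1 0 * \<omega> powi (a - - 1) = 1 \<and> phase_ratio phi 0 1 1 * \<omega> powi (a - 1) = 1) \<and>
      (\<exists>b. phase_ratio phi 0 2 0 * \<omega> powi (b - - 1) = 1 \<and> phase_ratio phi 0 2 1 * \<omega> powi (b - 0) = 1)"
    unfolding cong2pi_shift_iff phase_ratio_def by blast
  then show ?thesis
    unfolding common_cube_root_shift_iff by simp
qed

theorem mainTheorem10:
  fixes phi :: "nat \<Rightarrow> nat \<Rightarrow> real"
  assumes "\<forall>y<3. cong2pi (phi 0 y + phi 1 y + phi 2 y) 0"
  shows "orth_system phi \<longleftrightarrow>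
    (\<exists>a b :: int. case_a (shift_phases a b phi) \<or> case_b (shift_phases a b phi))"
proof -
  have prod: "phase_ratio phi 0 1 0 * phase_ratio phi 0 1 1 * phase_ratio phi 0 1 2 = 1"
    "phase_ratio phi 0 2 0 * phase_ratio phi 0 2 1 * phase_ratio phi 0 2 2 = 1"
    by (rule phase_ratio_prod; use assms in simp)+
  have "orth_system phi \<longleftrightarrow>
      balanced (phase_ratio phi 0 1) \<and> balanced (phase_ratio phi 0 2) \<and> balanced (phase_ratio phi 1 2)"
    by (rule orth_system_iff_pairs)
  also have "\<dots> \<longleftrightarrow> (\<exists>a b. case_a (shift_phases a b phi)) \<or> (\<exists>a b. case_b (shift_phases a b phi))"
    unfolding balanced_quotient_iff [OF omega_square_add omega_neq_1 prod phase_ratio_trans]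
      ex_shift_case_a_iff ex_shift_case_b_iff
    by auto
  finally show ?thesis
    by blast
qed

end
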